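(* Let $R$ be a ring such that $\mathrm{char}(R)$ is finite and $J(R)$ is nil of bounded index. If the group $U(R/J(R))$ has finite exponent, then so does $U(R)$. If additionally $R/J(R)$ is clean, then $R$ is $n$-torsion clean for some $n\in\mathbb{N}$.
   Context: All rings are associative with identity; $\mathrm{char}(R):=|1\cdot\mathbb{Z}|$, $J(R)$ is the Jacobson radical, $U(\cdot)$ the unit group. An ideal $I$ is nil of bounded index if there is $k$ with $r^k=0$ for all $r\in I$. A ring is clean if every element is a sum of an idempotent and a unit. A ring $R$ is $n$-torsion clean if every $r\in R$ can be written $r=e+u$ with $e^2=e$, $u$ a unit, $u^n=1$, and $n$ is the smallest natural number with this property. *)

theory Defs
  imports "HOL-Algebra.Algebra"
begin

definition left_ideal :: "('a, 'b) ring_scheme \<Rightarrow> 'a set \<Rightarrow> bool" where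
  "left_ideal R I \<longleftrightarrow> additive_subgroup I R \<and>
     (\<forall>r \<in> carrier R. \<forall>x \<in> I. r \<otimes>\<^bsub>R\<^esub> x \<in> I)"

definition maximal_left_ideal :: "('a, 'b) ring_scheme \<Rightarrow> 'a set \<Rightarrow> bool" where
  "maximal_left_ideal R I \<longleftrightarrow> left_ideal R I \<and> I \<noteq> carrier R \<and>
     (\<forall>K. left_ideal R K \<and> I \<subseteq> K \<and> K \<noteq> carrier R \<longrightarrow> K = I)"

definition jacobson :: "('a, 'b) ring_scheme \<Rightarrow> 'a set" where
  "jacobson R = carrier R \<inter> \<Inter> {I. maximal_left_ideal R I}"

text \<open>char(R) = |1 Z| is finite.\<close>
definition finite_char :: "('a, 'b) ring_scheme \<Rightarrow> bool" where
  "finite_char R \<longleftrightarrow> finite {add_pow R (k::int) \<one>\<^bsub>R\<^esub> | k. True}"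

definition nil_bounded_index :: "('a, 'b) ring_scheme \<Rightarrow> 'a set \<Rightarrow> bool" where
  "nil_bounded_index R I \<longleftrightarrow> (\<exists>k::nat. \<forall>r \<in> I. r [^]\<^bsub>R\<^esub> k = \<zero>\<^bsub>R\<^esub>)"

definition units_finite_exponent :: "('a, 'b) ring_scheme \<Rightarrow> bool" where
  "units_finite_exponent R \<longleftrightarrow>
     (\<exists>n::nat. n > 0 \<and> (\<forall>u \<in> Units R. u [^]\<^bsub>R\<^esub> n = \<one>\<^bsub>R\<^esub>))"

definition clean :: "('a, 'b) ring_scheme \<Rightarrow> bool" where
  "clean R \<longleftrightarrow> (\<forall>r \<in> carrier R. \<exists>e u. e \<in> carrier R \<and> e \<otimes>\<^bsub>R\<^esub> e = e \<and>
      u \<in> Units R \<and> r = e \<oplus>\<^bsub>R\<^esub> u)"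

definition torsion_clean_prop :: "('a, 'b) ring_scheme \<Rightarrow> nat \<Rightarrow> bool" where
  "torsion_clean_prop R n \<longleftrightarrow> n > 0 \<and>
     (\<forall>r \<in> carrier R. \<exists>e u. e \<in> carrier R \<and> e \<otimes>\<^bsub>R\<^esub> e = e \<and>
        u \<in> Units R \<and> u [^]\<^bsub>R\<^esub> n = \<one>\<^bsub>R\<^esub> \<and> r = e \<oplus>\<^bsub>R\<^esub> u)"

definition torsion_clean :: "('a, 'b) ring_scheme \<Rightarrow> nat \<Rightarrow> bool" where
  "torsion_clean R n \<longleftrightarrow> torsion_clean_prop R n \<and> (\<forall>m < n. \<not> torsion_clean_prop R m)"

end

theory Submission
  imports Defs
begin

(* If c \<cdot> 1 = 0 and j^k = 0, then (1 + j)^(c^k) = 1: raising 1 + x to the c-th power kills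
   the linear term of the binomial expansion, so each such step raises the order of the error
   term in j.  Hence 1 + J consists of units of order dividing c^k, and a unit u of R with
   u^e \<in> 1 + J satisfies u^(e c^k) = 1.  For the clean decomposition, idempotents lift along
   the nil ideal J by the Newton iteration b \<mapsto> b + (b^2 - b)(1 - 2b), and an element that is
   a unit modulo J is a unit, because 1 + J consists of units.  Computations with a single
   element take place in its double centralizer, which is a commutative subring. *)

lemma (in cring) one_plus_pow_expand:
  assumes x: "x \<in> carrier R"
  shows "\<exists>s\<in>carrier R. (\<one> \<oplus> x) [^] (m::nat) = \<one> \<oplus> add_pow R m x \<oplus> x \<otimes> x \<otimes> s"
proof (induction m)
  case 0
  show ?case using x by (intro bexI[of _ \<zero>]) auto
next
  case (Suc m)
  then obtain s where s: "s \<in> carrier R" "(\<one> \<oplus> x) [^] m = \<one> \<oplus> add_pow R m x \<oplus> x \<otimes> x \<otimes> s"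
    by blast
  define y where "y = add_pow R m x"
  have y: "y \<in> carrier R" "add_pow R m \<one> \<in> carrier R" using x by (auto simp: y_def)
  have yx: "y \<otimes> x = x \<otimes> x \<otimes> add_pow R m \<one>"
    using x unfolding y_def by (simp add: add_pow_ldistr add_pow_rdistr)
  have "(\<one> \<oplus> x) [^] Suc m = (\<one> \<oplus> y \<oplus> x \<otimes> x \<otimes> s) \<otimes> (\<one> \<oplus> x)"
    using s y_def by simp
  also have "\<dots> = \<one> \<oplus> (y \<oplus> x) \<oplus> x \<otimes> x \<otimes> (s \<oplus> x \<otimes> s) \<oplus> y \<otimes> x"
    using x y s by algebra
  also have "\<dots> = \<one> \<oplus> (y \<oplus> x) \<oplus> x \<otimes> x \<otimes> (s \<oplus> x \<otimes> s \<oplus> add_pow R m \<one>)"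
    unfolding yx using x y s by algebra
  also have "y \<oplus> x = add_pow R (Suc m) x"
    unfolding y_def using x by (simp add: add.nat_pow_Suc)
  finally show ?case using x y s by (intro bexI[of _ "s \<oplus> x \<otimes> s \<oplus> add_pow R m \<one>"]) auto
qed

lemma (in cring) one_plus_pow_char:
  assumes x: "x \<in> carrier R" and c: "add_pow R (c::nat) \<one> = \<zero>"
  shows "\<exists>s\<in>carrier R. (\<one> \<oplus> x) [^] c = \<one> \<oplus> x \<otimes> x \<otimes> s"
proof -
  have "add_pow R c x = \<zero>"
    using add_pow_ldistr[of \<one> x c] x c by simp
  then show ?thesis using one_plus_pow_expand[OF x, of c] x by auto
qed

lemma (in cring) one_plus_pow_char_power:
  assumes x: "x \<in> carrier R" and c: "add_pow R (c::nat) \<one> = \<zero>"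
  shows "\<exists>w\<in>carrier R. (\<one> \<oplus> x) [^] (c ^ m) = \<one> \<oplus> x [^] Suc m \<otimes> w"
proof (induction m)
  case 0
  show ?case using x by (intro bexI[of _ \<one>]) auto
next
  case (Suc m)
  then obtain w where w: "w \<in> carrier R" "(\<one> \<oplus> x) [^] (c ^ m) = \<one> \<oplus> x [^] Suc m \<otimes> w"
    by blast
  have p: "x [^] m \<in> carrier R" using x by simp
  obtain s where s: "s \<in> carrier R"
    "(\<one> \<oplus> x [^] Suc m \<otimes> w) [^] c = \<one> \<oplus> (x [^] Suc m \<otimes> w) \<otimes> (x [^] Suc m \<otimes> w) \<otimes> s"
    using one_plus_pow_char[OF _ c, of "x [^] Suc m \<otimes> w"] x w by auto
  have "(\<one> \<oplus> x) [^] (c ^ Suc m) = ((\<one> \<oplus> x) [^] (c ^ m)) [^] c"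
    using x by (simp add: nat_pow_pow mult.commute)
  also have "\<dots> = \<one> \<oplus> (x [^] Suc m \<otimes> w) \<otimes> (x [^] Suc m \<otimes> w) \<otimes> s"
    using w s by simp
  also have "\<dots> = \<one> \<oplus> x [^] Suc (Suc m) \<otimes> (x [^] m \<otimes> w \<otimes> w \<otimes> s)"
    unfolding nat_pow_Suc using p x w s by algebra
  finally show ?case using p w s by auto
qed

lemma (in cring) idempotent_newton_step:
  assumes b: "b \<in> carrier R" and d: "d \<in> carrier R" and bd: "b \<otimes> b = b \<oplus> d"
  shows "(b \<oplus> d \<otimes> (\<one> \<ominus> b \<ominus> b)) \<otimes> (b \<oplus> d \<otimes> (\<one> \<ominus> b \<ominus> b))
       = (b \<oplus> d \<otimes> (\<one> \<ominus> b \<ominus> b)) \<oplus> d \<otimes> d \<otimes> (d \<oplus> d \<oplus> d \<oplus> d \<ominus> \<one> \<ominus> \<one> \<ominus> \<one>)"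
proof -
  define u where "u = \<one> \<ominus> b \<ominus> b"
  have u: "u \<in> carrier R" using b by (simp add: u_def)
  have d_eq: "d = b \<otimes> b \<ominus> b"
    using b d bd by (metis a_minus_def add.inv_solve_left' a_comm m_closed add.inv_closed)
  have uu: "u \<otimes> u = \<one> \<oplus> (d \<oplus> d \<oplus> d \<oplus> d)"
    unfolding u_def d_eq using b by algebra
  have bb: "b \<oplus> b = \<one> \<ominus> u"
    unfolding u_def using b by algebra
  have "(b \<oplus> d \<otimes> u) \<otimes> (b \<oplus> d \<otimes> u) = b \<otimes> b \<oplus> d \<otimes> u \<otimes> (b \<oplus> b) \<oplus> d \<otimes> d \<otimes> (u \<otimes> u)"
    using b d u by algebra
  also have "\<dots> = (b \<oplus> d) \<oplus> d \<otimes> u \<otimes> (\<one> \<ominus> u) \<oplus> d \<otimes> d \<otimes> (u \<otimes> u)"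
    unfolding bd bb ..
  also have "\<dots> = (b \<oplus> d \<otimes> u) \<oplus> d \<ominus> d \<otimes> (u \<otimes> u) \<oplus> d \<otimes> d \<otimes> (u \<otimes> u)"
    using b d u by algebra
  also have "\<dots> = (b \<oplus> d \<otimes> u) \<oplus> d \<otimes> d \<otimes> (d \<oplus> d \<oplus> d \<oplus> d \<ominus> \<one> \<ominus> \<one> \<ominus> \<one>)"
    unfolding uu using b d u by algebra
  finally show ?thesis unfolding u_def .
qed

lemma (in cring) idempotent_newton_iterate:
  assumes a: "a \<in> carrier R" and n: "n \<in> carrier R" and an: "a \<otimes> a = a \<oplus> n"
  shows "\<exists>b\<in>carrier R. \<exists>t\<in>carrier R. \<exists>w\<in>carrier R.
           b = a \<oplus> n \<otimes> t \<and> b \<otimes> b = b \<oplus> n [^] Suc m \<otimes> w"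
proof (induction m)
  case 0
  have "a = a \<oplus> n \<otimes> \<zero>" "a \<otimes> a = a \<oplus> n [^] Suc 0 \<otimes> \<one>" using a n an by simp_all
  then show ?case using a by blast
next
  case (Suc m)
  then obtain b t w where b: "b \<in> carrier R" "t \<in> carrier R" "w \<in> carrier R"
    and b_eq: "b = a \<oplus> n \<otimes> t" and bb: "b \<otimes> b = b \<oplus> n [^] Suc m \<otimes> w"
    by blast
  define d where "d = n [^] Suc m \<otimes> w"
  define e where "e = d \<oplus> d \<oplus> d \<oplus> d \<ominus> \<one> \<ominus> \<one> \<ominus> \<one>"
  define b' where "b' = b \<oplus> d \<otimes> (\<one> \<ominus> b \<ominus> b)"
  define t' where "t' = t \<oplus> n [^] m \<otimes> w \<otimes> (\<one> \<ominus> b \<ominus> b)"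
  define w' where "w' = n [^] m \<otimes> w \<otimes> w \<otimes> e"
  have p: "n [^] m \<in> carrier R" using n by simp
  have d: "d \<in> carrier R" using n b by (simp add: d_def)
  have e: "e \<in> carrier R" using d by (simp add: e_def)
  have bd: "b \<otimes> b = b \<oplus> d" using bb by (simp add: d_def)
  have "b' \<otimes> b' = b' \<oplus> d \<otimes> d \<otimes> e"
    unfolding b'_def e_def by (rule idempotent_newton_step[OF b(1) d bd])
  also have "d \<otimes> d \<otimes> e = n [^] Suc (Suc m) \<otimes> w'"
    unfolding d_def w'_def nat_pow_Suc using p n b e by algebra
  finally have "b' \<otimes> b' = b' \<oplus> n [^] Suc (Suc m) \<otimes> w'" .
  moreover have "b' = a \<oplus> n \<otimes> t'"
    unfolding b'_def t'_def d_def nat_pow_Suc b_eq using p a n b by algebra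
  moreover have "b' \<in> carrier R" "t' \<in> carrier R" "w' \<in> carrier R"
    using b d e p by (simp_all add: b'_def t'_def w'_def)
  ultimately show ?case by blast
qed

definition double_centralizer :: "('a, 'b) ring_scheme \<Rightarrow> 'a \<Rightarrow> 'a set" where
  "double_centralizer R a =
     {y \<in> carrier R. \<forall>z\<in>carrier R. z \<otimes>\<^bsub>R\<^esub> a = a \<otimes>\<^bsub>R\<^esub> z \<longrightarrow> z \<otimes>\<^bsub>R\<^esub> y = y \<otimes>\<^bsub>R\<^esub> z}"

lemma (in ring) double_centralizer_mem: "a \<in> carrier R \<Longrightarrow> a \<in> double_centralizer R a"
  unfolding double_centralizer_def by auto

lemma (in ring) double_centralizer_subcring:
  assumes a: "a \<in> carrier R"
  shows "subcring (double_centralizer R a) R"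
proof (rule subcringI)
  show "subring (double_centralizer R a) R"
  proof (rule subringI)
    show "double_centralizer R a \<subseteq> carrier R"
      unfolding double_centralizer_def by auto
    show "\<one> \<in> double_centralizer R a"
      unfolding double_centralizer_def by auto
    show "\<ominus> h \<in> double_centralizer R a" if "h \<in> double_centralizer R a" for h
      using that unfolding double_centralizer_def by (auto simp: l_minus r_minus)
    show "h1 \<otimes> h2 \<in> double_centralizer R a"
      if "h1 \<in> double_centralizer R a" "h2 \<in> double_centralizer R a" for h1 h2
      using that unfolding double_centralizer_def by (auto simp: m_assoc[symmetric]) (metis m_assoc)
    show "h1 \<oplus> h2 \<in> double_centralizer R a"
      if "h1 \<in> double_centralizer R a" "h2 \<in> double_centralizer R a" for h1 h2
      using that unfolding double_centralizer_def by (auto simp: l_distr r_distr)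
  qed
  show "h1 \<otimes> h2 = h2 \<otimes> h1"
    if "h1 \<in> double_centralizer R a" "h2 \<in> double_centralizer R a" for h1 h2
  proof -
    have "h1 \<otimes> a = a \<otimes> h1" using that(1) a unfolding double_centralizer_def by auto
    then show ?thesis using that unfolding double_centralizer_def by auto
  qed
qed

lemma (in ring) double_centralizer_cring:
  "a \<in> carrier R \<Longrightarrow> cring (R\<lparr>carrier := double_centralizer R a\<rparr>)"
  using double_centralizer_subcring subcring_iff subcringE(1) by blast

lemma add_pow_consistent: "add_pow (R\<lparr>carrier := H\<rparr>) (n::nat) x = add_pow R n x"
  unfolding add_pow_def nat_pow_def by simp

lemma (in ring) one_plus_nilpotent_pow_char:
  assumes x: "x \<in> carrier R" and c: "add_pow R (c::nat) \<one> = \<zero>" and k: "x [^] (k::nat) = \<zero>"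
  shows "(\<one> \<oplus> x) [^] (c ^ k) = \<one>"
proof -
  have H: "double_centralizer R x \<subseteq> carrier R"
    using subcringE(1)[OF double_centralizer_subcring[OF x]] .
  obtain w where w: "w \<in> double_centralizer R x"
    and eq: "(\<one> \<oplus> x) [^] (c ^ k) = \<one> \<oplus> x [^] Suc k \<otimes> w"
    using cring.one_plus_pow_char_power[OF double_centralizer_cring[OF x], of x c k]
      double_centralizer_mem[OF x] c
    by (auto simp: add_pow_consistent nat_pow_consistent[symmetric])
  have "x [^] Suc k = \<zero>" using x k by simp
  then show ?thesis using eq w H by auto
qed

lemma (in ring) idempotent_lift_nilpotent:
  assumes a: "a \<in> carrier R" and k: "(a \<otimes> a \<ominus> a) [^] (k::nat) = \<zero>"
  obtains t where "t \<in> carrier R"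
    "(a \<oplus> (a \<otimes> a \<ominus> a) \<otimes> t) \<otimes> (a \<oplus> (a \<otimes> a \<ominus> a) \<otimes> t) = a \<oplus> (a \<otimes> a \<ominus> a) \<otimes> t"
proof -
  let ?n = "a \<otimes> a \<ominus> a"
  have sub: "subcring (double_centralizer R a) R" by (rule double_centralizer_subcring[OF a])
  note H = subcringE[OF sub]
  have aH: "a \<in> double_centralizer R a" by (rule double_centralizer_mem[OF a])
  have nH: "?n \<in> double_centralizer R a"
    unfolding a_minus_def using H(5,6,7) aH by blast
  have an: "a \<otimes> a = a \<oplus> ?n" using a by (simp add: a_minus_def add.m_lcomm[of a] r_neg)
  obtain b t w
    where bt: "b \<in> double_centralizer R a" "t \<in> double_centralizer R a" "w \<in> double_centralizer R a"
    and b_eq: "b = a \<oplus> ?n \<otimes> t" and bb: "b \<otimes> b = b \<oplus> ?n [^] Suc k \<otimes> w"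
    using cring.idempotent_newton_iterate[OF double_centralizer_cring[OF a], of a ?n k] aH nH an
    by (auto simp: nat_pow_consistent[symmetric])
  have carr: "b \<in> carrier R" "t \<in> carrier R" "w \<in> carrier R" using bt H(1) by auto
  have "?n [^] Suc k = \<zero>" using a k by simp
  then have "b \<otimes> b = b" using bb carr by simp
  then show ?thesis using that carr b_eq by blast
qed

lemma (in ring) left_idealI:
  assumes "I \<subseteq> carrier R" "\<zero> \<in> I"
    and "\<And>x y. x \<in> I \<Longrightarrow> y \<in> I \<Longrightarrow> x \<oplus> y \<in> I"
    and "\<And>x. x \<in> I \<Longrightarrow> \<ominus> x \<in> I"
    and "\<And>r x. r \<in> carrier R \<Longrightarrow> x \<in> I \<Longrightarrow> r \<otimes> x \<in> I"
  shows "left_ideal R I"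
  unfolding left_ideal_def using assms by (auto intro!: additive_subgroupI add.subgroupI)

lemma (in ring) left_idealD:
  assumes "left_ideal R I"
  shows "I \<subseteq> carrier R" "\<zero> \<in> I"
    and "\<And>x y. x \<in> I \<Longrightarrow> y \<in> I \<Longrightarrow> x \<oplus> y \<in> I"
    and "\<And>x. x \<in> I \<Longrightarrow> \<ominus> x \<in> I"
    and "\<And>r x. r \<in> carrier R \<Longrightarrow> x \<in> I \<Longrightarrow> r \<otimes> x \<in> I"
  using assms unfolding left_ideal_def
  by (auto dest: additive_subgroup.a_subset additive_subgroup.zero_closed
      additive_subgroup.a_closed additive_subgroup.a_inv_closed)

lemma (in ring) left_ideal_one_imp_carrier:
  assumes "left_ideal R K" "\<one> \<in> K"
  shows "K = carrier R"
  using left_idealD[OF assms(1)] assms(2) by (metis r_one subsetI subset_antisym)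

lemma (in ring) left_ideal_colon:
  assumes M: "left_ideal R M" and r: "r \<in> carrier R"
  shows "left_ideal R {y \<in> carrier R. y \<otimes> r \<in> M}"
  using left_idealD[OF M] r
  by (intro left_idealI) (auto simp: l_distr l_minus m_assoc)

lemma (in ring) left_ideal_mult_plus:
  assumes K: "left_ideal R K" and M: "left_ideal R M" and r: "r \<in> carrier R"
  shows "left_ideal R {k \<otimes> r \<oplus> m | k m. k \<in> K \<and> m \<in> M}"
proof (rule left_idealI)
  note KD = left_idealD[OF K] and MD = left_idealD[OF M]
  let ?L = "{k \<otimes> r \<oplus> m | k m. k \<in> K \<and> m \<in> M}"
  show "?L \<subseteq> carrier R" using KD(1) MD(1) r by auto
  show "\<zero> \<in> ?L" using KD(2) MD(2) r by (auto intro!: exI[of _ \<zero>])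
  show "x \<oplus> y \<in> ?L" if xy: "x \<in> ?L" "y \<in> ?L" for x y
  proof -
    obtain k1 m1 where x: "x = k1 \<otimes> r \<oplus> m1" and mem1: "k1 \<in> K" "m1 \<in> M"
      using xy(1) by blast
    obtain k2 m2 where y: "y = k2 \<otimes> r \<oplus> m2" and mem2: "k2 \<in> K" "m2 \<in> M"
      using xy(2) by blast
    note mem = mem1 mem2
    have "x \<oplus> y = (k1 \<oplus> k2) \<otimes> r \<oplus> (m1 \<oplus> m2)"
      unfolding x y using mem KD(1) MD(1) r by (simp add: subset_iff l_distr a_ac)
    then show ?thesis using mem KD(3) MD(3) by blast
  qed
  show "\<ominus> x \<in> ?L" if xL: "x \<in> ?L" for x
  proof -
    obtain k m where x: "x = k \<otimes> r \<oplus> m" and mem: "k \<in> K" "m \<in> M"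
      using xL by blast
    have "\<ominus> x = (\<ominus> k) \<otimes> r \<oplus> \<ominus> m"
      unfolding x using mem KD(1) MD(1) r by (simp add: subset_iff l_minus minus_add)
    then show ?thesis using mem KD(4) MD(4) by blast
  qed
  show "s \<otimes> x \<in> ?L" if s: "s \<in> carrier R" and xL: "x \<in> ?L" for s x
  proof -
    obtain k m where x: "x = k \<otimes> r \<oplus> m" and mem: "k \<in> K" "m \<in> M"
      using xL by blast
    have "s \<otimes> x = (s \<otimes> k) \<otimes> r \<oplus> s \<otimes> m"
      unfolding x using s mem KD(1) MD(1) r by (simp add: subset_iff r_distr m_assoc)
    then show ?thesis using s mem KD(5) MD(5) by blast
  qed
qed

lemma (in ring) maximal_left_ideal_colon:
  assumes M: "maximal_left_ideal R M" and r: "r \<in> carrier R" "r \<notin> M"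
  shows "maximal_left_ideal R {y \<in> carrier R. y \<otimes> r \<in> M}"
proof -
  let ?C = "{y \<in> carrier R. y \<otimes> r \<in> M}"
  have LM: "left_ideal R M" and Mmax: "\<And>K. left_ideal R K \<Longrightarrow> M \<subseteq> K \<Longrightarrow> K \<noteq> carrier R \<Longrightarrow> K = M"
    using M unfolding maximal_left_ideal_def by auto
  note MD = left_idealD[OF LM]
  (* A left ideal K properly containing ?C makes K r + M a left ideal properly containing M,
     hence all of R; writing r = k' r + m puts 1 - k' into ?C, so 1 \<in> K. *)
  have "K = ?C" if K: "left_ideal R K" "?C \<subseteq> K" "K \<noteq> carrier R" for K
  proof (rule ccontr)
    assume "K \<noteq> ?C"
    then obtain k where k: "k \<in> K" "k \<otimes> r \<notin> M" using K(1,2) left_idealD(1) by blast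
    let ?L = "{k \<otimes> r \<oplus> m | k m. k \<in> K \<and> m \<in> M}"
    have L: "left_ideal R ?L" by (rule left_ideal_mult_plus[OF K(1) LM r(1)])
    have "M \<subseteq> ?L"
    proof
      fix m assume "m \<in> M"
      then have "m = \<zero> \<otimes> r \<oplus> m" using MD(1) r by auto
      then show "m \<in> ?L" using \<open>m \<in> M\<close> left_idealD(2)[OF K(1)] by blast
    qed
    moreover have "k \<otimes> r \<in> ?L"
    proof -
      have "k \<otimes> r = k \<otimes> r \<oplus> \<zero>" using k(1) left_idealD(1)[OF K(1)] r by auto
      then show ?thesis using k(1) MD(2) by blast
    qed
    ultimately have "?L = carrier R" using Mmax[OF L] k(2) by blast
    then obtain k' m where km: "r = k' \<otimes> r \<oplus> m" "k' \<in> K" "m \<in> M"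
      using r(1) by blast
    have k': "k' \<in> carrier R" "m \<in> carrier R" using km left_idealD(1)[OF K(1)] MD(1) by auto
    have "(\<one> \<ominus> k') \<otimes> r = m"
      using k' r(1) km(1) by (metis a_minus_def add.inv_solve_left' add.m_comm l_minus l_distr
          one_closed m_closed add.inv_closed l_one)
    then have "\<one> \<ominus> k' \<in> K" using km(3) k' K(2) by auto
    moreover have "\<one> = (\<one> \<ominus> k') \<oplus> k'"
      using k'(1) by (metis a_minus_def add.m_assoc l_neg r_zero one_closed add.inv_closed)
    ultimately have "\<one> \<in> K" using left_idealD(3)[OF K(1) _ km(2)] by metis
    then show False using left_ideal_one_imp_carrier[OF K(1)] K(3) by blast
  qed
  moreover have "?C \<noteq> carrier R"
  proof
    assume "?C = carrier R"
    then have "\<one> \<otimes> r \<in> M" by blast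
    then show False using r by simp
  qed
  ultimately show ?thesis
    unfolding maximal_left_ideal_def using left_ideal_colon[OF LM r(1)] by blast
qed

lemma (in ring) jacobson_ideal: "ideal (jacobson R) R"
proof (rule idealI)
  have left: "left_ideal R M" if "maximal_left_ideal R M" for M
    using that unfolding maximal_left_ideal_def by auto
  show "ring R" by (rule ring_axioms)
  show "subgroup (jacobson R) (add_monoid R)"
  proof (rule add.subgroupI)
    show "jacobson R \<subseteq> carrier R" unfolding jacobson_def by auto
    show "jacobson R \<noteq> {}" unfolding jacobson_def using left_idealD(2)[OF left] by auto
    show "\<ominus> a \<in> jacobson R" if "a \<in> jacobson R" for a
      using that left_idealD(4)[OF left] unfolding jacobson_def by auto
    show "a \<oplus> b \<in> jacobson R" if "a \<in> jacobson R" "b \<in> jacobson R" for a b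
      using that left_idealD(3)[OF left] unfolding jacobson_def by auto
  qed
  show "x \<otimes> a \<in> jacobson R" if "a \<in> jacobson R" "x \<in> carrier R" for a x
    using that left_idealD(5)[OF left] unfolding jacobson_def by auto
  show "a \<otimes> x \<in> jacobson R" if a: "a \<in> jacobson R" and x: "x \<in> carrier R" for a x
  proof -
    have "a \<otimes> x \<in> M" if M: "maximal_left_ideal R M" for M
    proof (cases "x \<in> M")
      case True
      then show ?thesis using left_idealD(5)[OF left[OF M]] a unfolding jacobson_def by auto
    next
      case False
      then show ?thesis using a maximal_left_ideal_colon[OF M x False] unfolding jacobson_def by blast
    qed
    then show ?thesis using a x unfolding jacobson_def by auto
  qed
qed

lemma (in monoid) Units_of_mult_Units:
  assumes x: "x \<in> carrier G" and y: "y \<in> carrier G"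
    and xy: "x \<otimes> y \<in> Units G" and yx: "y \<otimes> x \<in> Units G"
  shows "x \<in> Units G"
proof -
  define r where "r = y \<otimes> inv (x \<otimes> y)"
  define l where "l = inv (y \<otimes> x) \<otimes> y"
  have r: "r \<in> carrier G" "x \<otimes> r = \<one>"
    using x y xy by (simp_all add: r_def m_assoc[symmetric])
  have l: "l \<in> carrier G" "l \<otimes> x = \<one>"
    using x y yx by (simp_all add: l_def m_assoc)
  have "l = r" by (rule inv_unique[OF l(2) r(2) x l(1) r(1)])
  then show ?thesis unfolding Units_def using x l r by auto
qed

lemma (in monoid) pow_eq_one_imp_Units:
  assumes x: "x \<in> carrier G" and n: "x [^] (n::nat) = \<one>" "n > 0"
  shows "x \<in> Units G"
proof -
  have "x \<otimes> x [^] (n - 1) = \<one>" "x [^] (n - 1) \<otimes> x = \<one>"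
    using x n by (metis Suc_diff_1 nat_pow_Suc nat_pow_Suc2)+
  then show ?thesis unfolding Units_def using x by auto
qed

lemma (in ring_hom_ring) hom_Units:
  assumes u: "u \<in> Units R"
  shows "h u \<in> Units S"
proof -
  have "h u \<otimes>\<^bsub>S\<^esub> h (inv u) = \<one>\<^bsub>S\<^esub>" "h (inv u) \<otimes>\<^bsub>S\<^esub> h u = \<one>\<^bsub>S\<^esub>"
    using u hom_mult[of u "inv u"] hom_mult[of "inv u" u] by auto
  then show ?thesis unfolding Units_def using u by auto
qed

lemma (in ring) finite_charE:
  assumes "finite_char R"
  obtains c :: nat where "c > 0" "add_pow R c \<one> = \<zero>"
proof -
  let ?f = "\<lambda>k::int. add_pow R k \<one>"
  have "finite (range ?f)" using assms unfolding finite_char_def by (simp add: full_SetCompr_eq)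
  then have "\<not> inj ?f" using finite_imageD infinite_UNIV_int by blast
  then obtain k1 k2 where k: "k1 \<noteq> k2" "?f k1 = ?f k2" unfolding inj_def by blast
  have "?f (k1 - k2) = \<zero>" "?f (k2 - k1) = \<zero>"
    using k(2) add.int_pow_diff[of \<one> k1 k2] add.int_pow_diff[of \<one> k2 k1] by (simp_all add: r_neg)
  then have "?f (int (nat \<bar>k1 - k2\<bar>)) = \<zero>" by (cases "k2 \<le> k1") simp_all
  then have "add_pow R (nat \<bar>k1 - k2\<bar>) \<one> = \<zero>" by (simp add: add_pow_def int_pow_int)
  then show ?thesis using that[of "nat \<bar>k1 - k2\<bar>"] k(1) by auto
qed

lemma (in ring) quotient_carrierE:
  assumes "A \<in> carrier (R Quot I)"
  obtains a where "a \<in> carrier R" "A = I +> a"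
  using assms unfolding FactRing_def A_RCOSETS_def' by auto

lemma (in ring) rcos_eq_oneE:
  assumes I: "ideal I R" and x: "x \<in> carrier R" and "I +> x = \<one>\<^bsub>R Quot I\<^esub>"
  obtains j where "j \<in> I" "x = \<one> \<oplus> j"
proof -
  have "x \<ominus> \<one> \<in> I"
    using quotient_eq_iff_same_a_r_cos[OF I x one_closed] assms(3) by (simp add: FactRing_def)
  moreover have "x = \<one> \<oplus> (x \<ominus> \<one>)" using x by (simp add: a_minus_def a_comm a_lcomm r_neg)
  ultimately show ?thesis using that by blast
qed

lemma (in ring) Units_of_quotient_Units:
  assumes I: "ideal I R" and one_plus: "\<And>j. j \<in> I \<Longrightarrow> \<one> \<oplus> j \<in> Units R"
    and x: "x \<in> carrier R" and unit: "I +> x \<in> Units (R Quot I)"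
  shows "x \<in> Units R"
proof -
  interpret Q: ring_hom_ring R "R Quot I" "(+>) I" by (rule ideal.rcos_ring_hom_ring[OF I])
  have lift_one: "y \<in> Units R" if "y \<in> carrier R" "I +> y = \<one>\<^bsub>R Quot I\<^esub>" for y
    using rcos_eq_oneE[OF I that] one_plus by metis
  obtain V where V: "V \<in> carrier (R Quot I)"
    "(I +> x) \<otimes>\<^bsub>R Quot I\<^esub> V = \<one>\<^bsub>R Quot I\<^esub>" "V \<otimes>\<^bsub>R Quot I\<^esub> (I +> x) = \<one>\<^bsub>R Quot I\<^esub>"
    using unit unfolding Units_def by blast
  obtain v where v: "v \<in> carrier R" "V = I +> v" using V(1) by (rule quotient_carrierE)
  have "x \<otimes> v \<in> Units R" "v \<otimes> x \<in> Units R"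
    using lift_one[of "x \<otimes> v"] lift_one[of "v \<otimes> x"] V x v by simp_all
  then show ?thesis using Units_of_mult_Units[OF x v(1)] by blast
qed

lemma (in ring) Units_pow_lift:
  assumes I: "ideal I R" and unip: "\<And>j. j \<in> I \<Longrightarrow> (\<one> \<oplus> j) [^] (m::nat) = \<one>"
    and exp: "\<And>U. U \<in> Units (R Quot I) \<Longrightarrow> U [^]\<^bsub>R Quot I\<^esub> (e::nat) = \<one>\<^bsub>R Quot I\<^esub>"
    and u: "u \<in> Units R"
  shows "u [^] (e * m) = \<one>"
proof -
  interpret Q: ring_hom_ring R "R Quot I" "(+>) I" by (rule ideal.rcos_ring_hom_ring[OF I])
  have uc: "u \<in> carrier R" using u by blast
  have "I +> (u [^] e) = \<one>\<^bsub>R Quot I\<^esub>"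
    using Q.hom_nat_pow[OF uc] exp[OF Q.hom_Units[OF u]] by simp
  then obtain j where j: "j \<in> I" "u [^] e = \<one> \<oplus> j"
    using rcos_eq_oneE[OF I nat_pow_closed[OF uc]] by metis
  have "u [^] (e * m) = (u [^] e) [^] m" using uc by (simp add: nat_pow_pow)
  then show ?thesis using unip j by simp
qed

lemma (in ring) idempotent_lift:
  assumes I: "ideal I R" and nil: "\<And>x. x \<in> I \<Longrightarrow> x [^] (k::nat) = \<zero>"
    and E: "E \<in> carrier (R Quot I)" "E \<otimes>\<^bsub>R Quot I\<^esub> E = E"
  obtains b where "b \<in> carrier R" "b \<otimes> b = b" "I +> b = E"
proof -
  interpret Q: ring_hom_ring R "R Quot I" "(+>) I" by (rule ideal.rcos_ring_hom_ring[OF I])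
  obtain a where a: "a \<in> carrier R" "E = I +> a" using E(1) by (rule quotient_carrierE)
  let ?n = "a \<otimes> a \<ominus> a"
  have n: "?n \<in> I"
    using quotient_eq_iff_same_a_r_cos[OF I m_closed[OF a(1) a(1)] a(1)] E(2) a by simp
  obtain t where t: "t \<in> carrier R" and idem: "(a \<oplus> ?n \<otimes> t) \<otimes> (a \<oplus> ?n \<otimes> t) = a \<oplus> ?n \<otimes> t"
    using idempotent_lift_nilpotent[OF a(1) nil[OF n]] by blast
  have nt: "?n \<otimes> t \<in> carrier R"
    using ideal.Icarr[OF I ideal.I_r_closed[OF I n t]] .
  have "I +> (a \<oplus> ?n \<otimes> t) = E \<oplus>\<^bsub>R Quot I\<^esub> (I +> (?n \<otimes> t))"
    unfolding a(2) by (rule Q.hom_add[OF a(1) nt])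
  also have "I +> (?n \<otimes> t) = \<zero>\<^bsub>R Quot I\<^esub>"
    using a_rcos_zero[OF I ideal.I_r_closed[OF I n t]] by (simp only: FactRing_def ring.select_convs)
  also have "E \<oplus>\<^bsub>R Quot I\<^esub> \<zero>\<^bsub>R Quot I\<^esub> = E" by (rule Q.S.r_zero[OF E(1)])
  finally show ?thesis using that[OF add.m_closed[OF a(1) nt] idem] by blast
qed

lemma (in ring) clean_lift:
  assumes I: "ideal I R" and one_plus: "\<And>j. j \<in> I \<Longrightarrow> \<one> \<oplus> j \<in> Units R"
    and nil: "\<And>x. x \<in> I \<Longrightarrow> x [^] (k::nat) = \<zero>"
    and clean: "clean (R Quot I)"
  shows "clean R"
  unfolding clean_def
proof
  fix r assume r: "r \<in> carrier R"
  interpret Q: ring_hom_ring R "R Quot I" "(+>) I" by (rule ideal.rcos_ring_hom_ring[OF I])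
  obtain E U where E: "E \<in> carrier (R Quot I)" "E \<otimes>\<^bsub>R Quot I\<^esub> E = E"
    and U: "U \<in> Units (R Quot I)" and r_eq: "I +> r = E \<oplus>\<^bsub>R Quot I\<^esub> U"
    using clean Q.hom_closed[OF r] unfolding clean_def by blast
  obtain b where b: "b \<in> carrier R" "b \<otimes> b = b" "I +> b = E"
    using idempotent_lift[OF I nil E] .
  have rb: "b \<oplus> (r \<ominus> b) = r" using r b(1) by (simp add: a_minus_def add.m_lcomm[of b] r_neg)
  have "E \<oplus>\<^bsub>R Quot I\<^esub> (I +> (r \<ominus> b)) = E \<oplus>\<^bsub>R Quot I\<^esub> U"
    using Q.hom_add[OF b(1) minus_closed[OF r b(1)]] unfolding rb b(3) r_eq by simp
  then have "I +> (r \<ominus> b) = U"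
    by (rule Q.S.add.l_cancel[OF _ Q.hom_closed[OF minus_closed[OF r b(1)]] Q.S.Units_closed[OF U] E(1)])
  then have "r \<ominus> b \<in> Units R"
    using Units_of_quotient_Units[OF I one_plus minus_closed[OF r b(1)]] U by simp
  then show "\<exists>e u. e \<in> carrier R \<and> e \<otimes> e = e \<and> u \<in> Units R \<and> r = e \<oplus> u"
    using b rb by metis
qed

lemma (in ring) torsion_clean_prop_of_clean:
  assumes "clean R" "n > 0" "\<And>u. u \<in> Units R \<Longrightarrow> u [^] n = \<one>"
  shows "torsion_clean_prop R n"
  using assms unfolding clean_def torsion_clean_prop_def by blast

lemma torsion_clean_Least:
  "torsion_clean_prop R n \<Longrightarrow> torsion_clean R (LEAST n. torsion_clean_prop R n)"
  unfolding torsion_clean_def by (meson LeastI not_less_Least)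

theorem corollary2p11:
  fixes R :: "('a, 'b) ring_scheme"
  assumes "ring R"
    and "finite_char R"
    and "nil_bounded_index R (jacobson R)"
    and "units_finite_exponent (R Quot (jacobson R))"
  shows "units_finite_exponent R \<and>
         (clean (R Quot (jacobson R)) \<longrightarrow> (\<exists>n. torsion_clean R n))"
proof -
  interpret ring R by fact
  have J: "ideal (jacobson R) R" by (rule jacobson_ideal)
  obtain c :: nat where c: "c > 0" "add_pow R c \<one>\<^bsub>R\<^esub> = \<zero>\<^bsub>R\<^esub>"
    using finite_charE[OF assms(2)] .
  obtain k :: nat where nil: "\<And>j. j \<in> jacobson R \<Longrightarrow> j [^]\<^bsub>R\<^esub> k = \<zero>\<^bsub>R\<^esub>"
    using assms(3) unfolding nil_bounded_index_def by blast
  obtain e :: nat where e: "e > 0" "\<And>U. U \<in> Units (R Quot jacobson R) \<Longrightarrow>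
      U [^]\<^bsub>R Quot jacobson R\<^esub> e = \<one>\<^bsub>R Quot jacobson R\<^esub>"
    using assms(4) unfolding units_finite_exponent_def by blast
  have unip: "(\<one>\<^bsub>R\<^esub> \<oplus>\<^bsub>R\<^esub> j) [^]\<^bsub>R\<^esub> (c ^ k) = \<one>\<^bsub>R\<^esub>" if "j \<in> jacobson R" for j
    using one_plus_nilpotent_pow_char[OF ideal.Icarr[OF J that] c(2) nil[OF that]] .
  have exponent: "u [^]\<^bsub>R\<^esub> (e * c ^ k) = \<one>\<^bsub>R\<^esub>" if "u \<in> Units R" for u
    using Units_pow_lift[OF J unip e(2) that] .
  have pos: "e * c ^ k > 0" using e(1) c(1) by simp
  have "\<exists>n. torsion_clean R n" if "clean (R Quot jacobson R)"
  proof -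
    have "\<one>\<^bsub>R\<^esub> \<oplus>\<^bsub>R\<^esub> j \<in> Units R" if "j \<in> jacobson R" for j
      using pow_eq_one_imp_Units[OF _ unip[OF that]] c(1) ideal.Icarr[OF J that] by simp
    then have "clean R" using clean_lift[OF J _ nil that] by blast
    then show ?thesis using torsion_clean_prop_of_clean[OF _ pos exponent] torsion_clean_Least by blast
  qed
  moreover have "units_finite_exponent R"
    unfolding units_finite_exponent_def using pos exponent by blast
  ultimately show ?thesis by blast
qed

end
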